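(* For all integers $2\le k\le n$, $$2kn+k\le \gamma_t(G_k\Box G_n)\le 2kn+2k.$$
   Context: For $m\ge 1$, $G_m$ is the graph with vertex set $\{a_1,\ldots,a_m\}\cup\{b_1,\ldots,b_m\}\cup\{c_1,\ldots,c_m\}$ in which $\{a_1,\ldots,a_m\}$ forms a clique, each $b_i$ is adjacent to $a_i$ and to $c_i$, and there are no other edges (i.e. $K_m$ with a path $P_3$ attached by an end-vertex at each clique vertex). $\gamma_t$ denotes the total domination number (minimum size of a set $S$ of vertices such that every vertex of the graph has a neighbor in $S$). $G\Box H$ is the Cartesian product: vertex set $V(G)\times V(H)$, with $(u_1,v_1)\sim(u_2,v_2)$ iff either $u_1=u_2$ and $v_1v_2\in E(H)$, or $v_1=v_2$ and $u_1u_2\in E(G)$. *)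

theory Defs
  imports Main
begin

datatype gvert = VA nat | VB nat | VC nat

text \<open>G_m: vertices a_i, b_i, c_i for i in {1..m}; the a_i form a clique, b_i ~ a_i, b_i ~ c_i.\<close>

definition G_verts :: "nat \<Rightarrow> gvert set" where
  "G_verts m = VA ` {1..m} \<union> VB ` {1..m} \<union> VC ` {1..m}"

fun G_edge :: "gvert \<Rightarrow> gvert \<Rightarrow> bool" where
  "G_edge (VA i) (VA j) = (i \<noteq> j)"
| "G_edge (VA i) (VB j) = (i = j)"
| "G_edge (VB i) (VA j) = (i = j)"
| "G_edge (VB i) (VC j) = (i = j)"
| "G_edge (VC i) (VB j) = (i = j)"
| "G_edge _ _ = False"

definition G_adj :: "nat \<Rightarrow> gvert \<Rightarrow> gvert \<Rightarrow> bool" where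
  "G_adj m u v = (u \<in> G_verts m \<and> v \<in> G_verts m \<and> G_edge u v)"

definition box_verts :: "'a set \<Rightarrow> 'b set \<Rightarrow> ('a \<times> 'b) set" where
  "box_verts V W = V \<times> W"

definition box_adj :: "('a \<Rightarrow> 'a \<Rightarrow> bool) \<Rightarrow> ('b \<Rightarrow> 'b \<Rightarrow> bool) \<Rightarrow> 'a \<times> 'b \<Rightarrow> 'a \<times> 'b \<Rightarrow> bool" where
  "box_adj E F p q = ((fst p = fst q \<and> F (snd p) (snd q)) \<or> (snd p = snd q \<and> E (fst p) (fst q)))"

definition is_tds :: "'a set \<Rightarrow> ('a \<Rightarrow> 'a \<Rightarrow> bool) \<Rightarrow> 'a set \<Rightarrow> bool" where
  "is_tds V E S = (S \<subseteq> V \<and> (\<forall>v\<in>V. \<exists>s\<in>S. E v s))"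

definition gamma_t :: "'a set \<Rightarrow> ('a \<Rightarrow> 'a \<Rightarrow> bool) \<Rightarrow> nat" where
  "gamma_t V E = (LEAST c. \<exists>S. is_tds V E S \<and> card S = c)"

end

theory Submission
  imports Defs
begin

text \<open>
  Cut G_k \<box> G_n into the k n blocks {a_i, b_i, c_i} \<times> {a_j, b_j, c_j}. Dominating (c_i, c_j)
  and (b_i, c_j) needs two distinct vertices of a total dominating set S in the block (i, j);
  call the block heavy if it contains three. Dominating (c_i, a_j), (a_i, c_j) and (c_i, b_j)
  from inside a light block is impossible, so S contains some (c_i, a_j') or (a_i', c_j), and
  either vertex makes its own block heavy. Hence if some row of blocks has no heavy block, every
  column has one, and |S| \<ge> min (k (2n + 1)) (n (2k + 1)) = 2kn + min k n. The upper bound is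
  an explicit total dominating set of size 2k(n - 1) + 4k.
\<close>

lemma mem_G_verts [simp]:
  "VA i \<in> G_verts m \<longleftrightarrow> i \<in> {1..m}"
  "VB i \<in> G_verts m \<longleftrightarrow> i \<in> {1..m}"
  "VC i \<in> G_verts m \<longleftrightarrow> i \<in> {1..m}"
  by (auto simp: G_verts_def)

lemma finite_G_verts [simp]: "finite (G_verts m)"
  by (simp add: G_verts_def)

lemma G_adj_VA: "G_adj m (VA i) u \<longleftrightarrow> i \<in> {1..m} \<and> (u = VB i \<or> (\<exists>j\<in>{1..m}. j \<noteq> i \<and> u = VA j))"
  by (cases u) (auto simp: G_adj_def)

lemma G_adj_VB: "G_adj m (VB i) u \<longleftrightarrow> i \<in> {1..m} \<and> (u = VA i \<or> u = VC i)"
  by (cases u) (auto simp: G_adj_def)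

lemma G_adj_VC: "G_adj m (VC i) u \<longleftrightarrow> i \<in> {1..m} \<and> u = VB i"
  by (cases u) (auto simp: G_adj_def)

lemma box_adj_Pair:
  "box_adj E F (x, y) (x', y') \<longleftrightarrow> (x = x' \<and> F y y') \<or> (y = y' \<and> E x x')"
  by (simp add: box_adj_def)

lemma gamma_t_le_card:
  assumes "is_tds V E S"
  shows "gamma_t V E \<le> card S"
  unfolding gamma_t_def using assms by (blast intro: Least_le)

lemma le_gamma_t:
  assumes "is_tds V E S0" and "\<And>S. is_tds V E S \<Longrightarrow> b \<le> card S"
  shows "b \<le> gamma_t V E"
proof -
  have "\<exists>S. is_tds V E S \<and> card S = gamma_t V E"
    unfolding gamma_t_def by (rule LeastI_ex) (use assms(1) in blast)
  then obtain S where "is_tds V E S" "card S = gamma_t V E" by blast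
  with assms(2) show ?thesis by metis
qed

lemma two_le_card_if_meets_disjoint:
  assumes "finite A" "X \<inter> Y = {}" "A \<inter> X \<noteq> {}" "A \<inter> Y \<noteq> {}"
  shows "2 \<le> card A"
proof -
  obtain x y where "x \<in> A \<inter> X" "y \<in> A \<inter> Y" using assms(3,4) by blast
  with assms(2) have "x \<noteq> y" "{x, y} \<subseteq> A" by auto
  then show ?thesis using card_mono[OF assms(1), of "{x, y}"] by simp
qed

lemma three_le_card_if_meets_disjoint:
  assumes "finite A" "X \<inter> Y = {}" "X \<inter> Z = {}" "Y \<inter> Z = {}"
    and "A \<inter> X \<noteq> {}" "A \<inter> Y \<noteq> {}" "A \<inter> Z \<noteq> {}"
  shows "3 \<le> card A"
proof -
  obtain x y z where "x \<in> A \<inter> X" "y \<in> A \<inter> Y" "z \<in> A \<inter> Z" using assms(5-7) by blast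
  with assms(2-4) have "x \<noteq> y" "x \<noteq> z" "y \<noteq> z" "{x, y, z} \<subseteq> A" by auto
  then show ?thesis using card_mono[OF assms(1), of "{x, y, z}"] by simp
qed

lemma two_card_plus_one_le_sum:
  fixes f :: "'a \<Rightarrow> nat"
  assumes "finite A" "\<forall>x\<in>A. 2 \<le> f x" "a \<in> A" "3 \<le> f a"
  shows "2 * card A + 1 \<le> sum f A"
proof -
  have "of_nat (card (A - {a})) * 2 \<le> sum f (A - {a})"
    by (rule sum_bounded_below) (use assms(2) in blast)
  moreover have "card A = Suc (card (A - {a}))"
    using card.remove[OF assms(1,3)] .
  moreover have "sum f A = f a + sum f (A - {a})"
    using sum.remove[OF assms(1,3)] .
  ultimately show ?thesis using assms(4) by simp
qed

definition G_cell :: "nat \<Rightarrow> gvert set" where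
  "G_cell i = {VA i, VB i, VC i}"

definition block :: "(gvert \<times> gvert) set \<Rightarrow> nat \<Rightarrow> nat \<Rightarrow> (gvert \<times> gvert) set" where
  "block S i j = S \<inter> G_cell i \<times> G_cell j"

lemma G_verts_eq_UN_G_cell: "G_verts m = (\<Union>i\<in>{1..m}. G_cell i)"
  by (auto simp: G_verts_def G_cell_def)

lemma disjoint_G_cell: "i \<noteq> i' \<Longrightarrow> G_cell i \<inter> G_cell i' = {}"
  by (auto simp: G_cell_def)

lemma card_eq_sum_card_block:
  assumes "S \<subseteq> G_verts k \<times> G_verts n"
  shows "card S = (\<Sum>i\<in>{1..k}. \<Sum>j\<in>{1..n}. card (block S i j))"
proof -
  have "S = (\<Union>p\<in>{1..k} \<times> {1..n}. block S (fst p) (snd p))"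
  proof
    show "S \<subseteq> (\<Union>p\<in>{1..k} \<times> {1..n}. block S (fst p) (snd p))"
    proof
      fix p assume p: "p \<in> S"
      have "fst p \<in> G_verts k" "snd p \<in> G_verts n"
        using subsetD[OF assms p] by (simp_all add: mem_Times_iff)
      then obtain i j where "i \<in> {1..k}" "fst p \<in> G_cell i" "j \<in> {1..n}" "snd p \<in> G_cell j"
        unfolding G_verts_eq_UN_G_cell by blast
      with p show "p \<in> (\<Union>p\<in>{1..k} \<times> {1..n}. block S (fst p) (snd p))"
        unfolding block_def by (intro UN_I[of "(i, j)"]) (auto simp: mem_Times_iff)
    qed
  qed (auto simp: block_def)
  also have "card \<dots> = (\<Sum>p\<in>{1..k} \<times> {1..n}. card (block S (fst p) (snd p)))"
  proof (rule card_UN_disjoint)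
    show "\<forall>p\<in>{1..k} \<times> {1..n}. finite (block S (fst p) (snd p))"
      by (simp add: block_def G_cell_def)
    show "\<forall>p\<in>{1..k} \<times> {1..n}. \<forall>q\<in>{1..k} \<times> {1..n}. p \<noteq> q \<longrightarrow>
        block S (fst p) (snd p) \<inter> block S (fst q) (snd q) = {}"
      using disjoint_G_cell by (fastforce simp: block_def)
  qed simp
  also have "\<dots> = (\<Sum>i\<in>{1..k}. \<Sum>j\<in>{1..n}. card (block S i j))"
    by (simp add: sum.cartesian_product case_prod_beta')
  finally show ?thesis .
qed

context
  fixes k n :: nat and S :: "(gvert \<times> gvert) set"
  assumes tds: "is_tds (box_verts (G_verts k) (G_verts n)) (box_adj (G_adj k) (G_adj n)) S"
begin

lemma tds_subset: "S \<subseteq> G_verts k \<times> G_verts n"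
  using tds by (simp add: is_tds_def box_verts_def)

lemma finite_tds: "finite S"
  using tds_subset by (rule finite_subset) simp

lemma finite_block: "finite (block S i j)"
  by (simp add: block_def finite_tds)

lemma tds_dominates:
  assumes "x \<in> G_verts k" "y \<in> G_verts n"
  shows "\<exists>x' y'. (x', y') \<in> S \<and> box_adj (G_adj k) (G_adj n) (x, y) (x', y')"
  using tds assms by (force simp: is_tds_def box_verts_def)

context
  fixes i j assumes i: "i \<in> {1..k}" and j: "j \<in> {1..n}"
begin

lemma dominated_CC: "block S i j \<inter> {(VB i, VC j), (VC i, VB j)} \<noteq> {}"
  using tds_dominates[of "VC i" "VC j"] i j
  by (auto simp: box_adj_Pair G_adj_VC block_def G_cell_def)

lemma dominated_BC: "block S i j \<inter> {(VA i, VC j), (VC i, VC j), (VB i, VB j)} \<noteq> {}"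
  using tds_dominates[of "VB i" "VC j"] i j
  by (auto simp: box_adj_Pair G_adj_VB G_adj_VC block_def G_cell_def)

lemma dominated_CB: "block S i j \<inter> {(VB i, VB j), (VC i, VA j), (VC i, VC j)} \<noteq> {}"
  using tds_dominates[of "VC i" "VB j"] i j
  by (auto simp: box_adj_Pair G_adj_VB G_adj_VC block_def G_cell_def)

lemma dominated_CA:
  "(\<exists>j'. (VC i, VA j') \<in> S) \<or> block S i j \<inter> {(VB i, VA j), (VC i, VB j)} \<noteq> {}"
  using tds_dominates[of "VC i" "VA j"] i j
  by (auto simp: box_adj_Pair G_adj_VA G_adj_VC block_def G_cell_def)

lemma dominated_AC:
  "(\<exists>i'. (VA i', VC j) \<in> S) \<or> block S i j \<inter> {(VB i, VC j), (VA i, VB j)} \<noteq> {}"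
  using tds_dominates[of "VA i" "VC j"] i j
  by (auto simp: box_adj_Pair G_adj_VA G_adj_VC block_def G_cell_def)

lemma two_le_card_block: "2 \<le> card (block S i j)"
  by (rule two_le_card_if_meets_disjoint[OF finite_block _ dominated_CC dominated_BC]) auto

lemma three_le_card_block_if_CA:
  assumes "(VC i, VA j) \<in> S"
  shows "3 \<le> card (block S i j)"
proof -
  have "block S i j \<inter> {(VC i, VA j)} \<noteq> {}"
    using assms i j by (auto simp: block_def G_cell_def)
  from three_le_card_if_meets_disjoint[OF finite_block _ _ _ this dominated_CC dominated_BC]
  show ?thesis by auto
qed

lemma three_le_card_block_if_AC:
  assumes "(VA i, VC j) \<in> S"
  shows "3 \<le> card (block S i j)"
proof -
  have "block S i j \<inter> {(VA i, VC j)} \<noteq> {}"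
    using assms i j by (auto simp: block_def G_cell_def)
  from three_le_card_if_meets_disjoint[OF finite_block _ _ _ this dominated_CC dominated_CB]
  show ?thesis by auto
qed

lemma light_block_forces_CA_or_AC:
  assumes "card (block S i j) < 3"
  shows "(\<exists>j'. (VC i, VA j') \<in> S) \<or> (\<exists>i'. (VA i', VC j) \<in> S)"
proof (rule ccontr)
  assume no_CA_AC: "\<not> ?thesis"
  then have CA: "block S i j \<inter> {(VB i, VA j), (VC i, VB j)} \<noteq> {}"
    and AC: "block S i j \<inter> {(VB i, VC j), (VA i, VB j)} \<noteq> {}"
    using dominated_CA dominated_AC by blast+
  have CB: "block S i j \<inter> {(VB i, VB j), (VC i, VC j)} \<noteq> {}"
    using dominated_CB no_CA_AC by (auto simp: block_def)
  have "3 \<le> card (block S i j)"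
    by (rule three_le_card_if_meets_disjoint[OF finite_block _ _ _ CA AC CB]) auto
  with assms show False by simp
qed

end

lemma heavy_block_in_every_column_or_row:
  "(\<forall>j\<in>{1..n}. \<exists>i\<in>{1..k}. 3 \<le> card (block S i j))
   \<or> (\<forall>i\<in>{1..k}. \<exists>j\<in>{1..n}. 3 \<le> card (block S i j))"
proof (rule disjCI)
  assume "\<not> (\<forall>i\<in>{1..k}. \<exists>j\<in>{1..n}. 3 \<le> card (block S i j))"
  then obtain i0 where i0: "i0 \<in> {1..k}" and light_row: "\<forall>j\<in>{1..n}. card (block S i0 j) < 3"
    by (auto simp: not_le)
  show "\<forall>j\<in>{1..n}. \<exists>i\<in>{1..k}. 3 \<le> card (block S i j)"
  proof
    fix j assume j: "j \<in> {1..n}"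
    have no_CA: "(VC i0, VA j') \<notin> S" for j'
    proof
      assume CA: "(VC i0, VA j') \<in> S"
      then have j': "j' \<in> {1..n}" using tds_subset by auto
      have "3 \<le> card (block S i0 j')" using three_le_card_block_if_CA[OF i0 j' CA] .
      moreover have "card (block S i0 j') < 3" using light_row j' ..
      ultimately show False by simp
    qed
    moreover have "card (block S i0 j) < 3" using light_row j ..
    ultimately obtain i' where AC: "(VA i', VC j) \<in> S"
      using light_block_forces_CA_or_AC[OF i0 j] by blast
    then have i': "i' \<in> {1..k}" using tds_subset by auto
    with three_le_card_block_if_AC[OF i' j AC] show "\<exists>i\<in>{1..k}. 3 \<le> card (block S i j)" ..
  qed
qed

lemma card_tds_lower_bound: "2 * k * n + min k n \<le> card S"
  using heavy_block_in_every_column_or_row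
proof
  assume columns: "\<forall>j\<in>{1..n}. \<exists>i\<in>{1..k}. 3 \<le> card (block S i j)"
  have "2 * card {1..k} + 1 \<le> (\<Sum>i\<in>{1..k}. card (block S i j))" if j: "j \<in> {1..n}" for j
  proof -
    obtain i where "i \<in> {1..k}" "3 \<le> card (block S i j)" using columns j by blast
    then show ?thesis
      by (intro two_card_plus_one_le_sum) (auto intro: two_le_card_block j)
  qed
  then have "n * (2 * k + 1) \<le> (\<Sum>j\<in>{1..n}. \<Sum>i\<in>{1..k}. card (block S i j))"
    using sum_bounded_below[of "{1..n}" "2 * k + 1"] by simp
  also have "\<dots> = (\<Sum>i\<in>{1..k}. \<Sum>j\<in>{1..n}. card (block S i j))"
    by (rule sum.swap)
  also have "\<dots> = card S"
    by (rule card_eq_sum_card_block[OF tds_subset, symmetric])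
  finally show ?thesis by (simp add: algebra_simps)
next
  assume rows: "\<forall>i\<in>{1..k}. \<exists>j\<in>{1..n}. 3 \<le> card (block S i j)"
  have "2 * card {1..n} + 1 \<le> (\<Sum>j\<in>{1..n}. card (block S i j))" if i: "i \<in> {1..k}" for i
  proof -
    obtain j where "j \<in> {1..n}" "3 \<le> card (block S i j)" using rows i by blast
    then show ?thesis
      by (intro two_card_plus_one_le_sum) (auto intro: two_le_card_block i)
  qed
  then have "k * (2 * n + 1) \<le> (\<Sum>i\<in>{1..k}. \<Sum>j\<in>{1..n}. card (block S i j))"
    using sum_bounded_below[of "{1..k}" "2 * n + 1"] by simp
  also have "\<dots> = card S"
    by (rule card_eq_sum_card_block[OF tds_subset, symmetric])
  finally show ?thesis by (simp add: algebra_simps)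
qed

end

definition G_box_tds :: "nat \<Rightarrow> nat \<Rightarrow> (gvert \<times> gvert) set" where
  "G_box_tds k n =
     VB ` {1..k} \<times> (VB ` ({1..n} - {2}) \<union> VC ` ({1..n} - {2}))
     \<union> VA ` {1..k} \<times> {VA 2, VC 2}
     \<union> VC ` {1..k} \<times> {VA 2, VB 2}"

text \<open>For every vertex, a neighbour in G_box_tds k n. The index "if i = 1 then 2 else 1" names
  a clique vertex of G_k other than a_i, which exists because k \<ge> 2.\<close>

fun G_box_dominator :: "gvert \<Rightarrow> gvert \<Rightarrow> gvert \<times> gvert" where
  "G_box_dominator (VA i) (VA j) = (if j = 2 then (VA (if i = 1 then 2 else 1), VA 2) else (VA i, VA 2))"
| "G_box_dominator (VA i) (VB j) = (if j = 2 then (VA i, VA 2) else (VB i, VB j))"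
| "G_box_dominator (VA i) (VC j) = (if j = 2 then (VA (if i = 1 then 2 else 1), VC 2) else (VB i, VC j))"
| "G_box_dominator (VB i) (VA j) = (if j = 2 then (VA i, VA 2) else (VB i, VB j))"
| "G_box_dominator (VB i) (VB j) = (if j = 2 then (VC i, VB 2) else (VB i, VC j))"
| "G_box_dominator (VB i) (VC j) = (if j = 2 then (VA i, VC 2) else (VB i, VB j))"
| "G_box_dominator (VC i) (VA j) = (if j = 2 then (VC i, VB 2) else (VC i, VA 2))"
| "G_box_dominator (VC i) (VB j) = (if j = 2 then (VC i, VA 2) else (VB i, VB j))"
| "G_box_dominator (VC i) (VC j) = (if j = 2 then (VC i, VB 2) else (VB i, VC j))"

lemma G_box_dominator:
  assumes "2 \<le> k" "2 \<le> n" "x \<in> G_verts k" "y \<in> G_verts n"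
  shows "G_box_dominator x y \<in> G_box_tds k n
    \<and> box_adj (G_adj k) (G_adj n) (x, y) (G_box_dominator x y)"
  using assms by (cases x; cases y) (auto simp: G_box_tds_def G_adj_def box_adj_Pair)

lemma is_tds_G_box_tds:
  assumes "2 \<le> k" "2 \<le> n"
  shows "is_tds (box_verts (G_verts k) (G_verts n)) (box_adj (G_adj k) (G_adj n)) (G_box_tds k n)"
  unfolding is_tds_def box_verts_def
proof
  show "G_box_tds k n \<subseteq> G_verts k \<times> G_verts n"
    using assms by (auto simp: G_box_tds_def)
  show "\<forall>v\<in>G_verts k \<times> G_verts n. \<exists>s\<in>G_box_tds k n. box_adj (G_adj k) (G_adj n) v s"
    using G_box_dominator[OF assms] by fast
qed

lemma card_G_box_tds:
  assumes "2 \<le> n"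
  shows "card (G_box_tds k n) \<le> 2 * k * n + 2 * k"
proof -
  have "card (G_box_tds k n)
      \<le> card (VB ` {1..k} \<times> (VB ` ({1..n} - {2}) \<union> VC ` ({1..n} - {2})))
        + card (VA ` {1..k} \<times> {VA 2, VC 2}) + card (VC ` {1..k} \<times> {VA 2, VB 2})"
    unfolding G_box_tds_def by (meson card_Un_le add_mono order_trans order_refl)
  also have "\<dots> = k * (2 * (n - 1)) + k * 2 + k * 2"
  proof -
    have "card (VB ` ({1..n} - {2}) \<union> VC ` ({1..n} - {2})) = 2 * (n - 1)"
      using assms by (subst card_Un_disjoint) (auto simp: card_image inj_on_def)
    then show ?thesis by (simp add: card_cartesian_product card_image inj_on_def)
  qed
  also have "\<dots> = 2 * k * n + 2 * k"
    using assms by (cases n) (simp_all add: algebra_simps)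
  finally show ?thesis .
qed

theorem proposition5:
  fixes k n :: nat
  assumes "2 \<le> k" and "k \<le> n"
  shows "2*k*n + k \<le> gamma_t (box_verts (G_verts k) (G_verts n)) (box_adj (G_adj k) (G_adj n))
       \<and> gamma_t (box_verts (G_verts k) (G_verts n)) (box_adj (G_adj k) (G_adj n)) \<le> 2*k*n + 2*k"
proof
  let ?V = "box_verts (G_verts k) (G_verts n)" and ?E = "box_adj (G_adj k) (G_adj n)"
  have n: "2 \<le> n" using assms by simp
  have tds: "is_tds ?V ?E (G_box_tds k n)" using is_tds_G_box_tds[OF assms(1) n] .
  show "2*k*n + k \<le> gamma_t ?V ?E"
  proof (rule le_gamma_t[OF tds])
    fix S assume "is_tds ?V ?E S"
    then have "2 * k * n + min k n \<le> card S" by (rule card_tds_lower_bound)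
    with assms(2) show "2*k*n + k \<le> card S" by simp
  qed
  show "gamma_t ?V ?E \<le> 2*k*n + 2*k"
    using gamma_t_le_card[OF tds] card_G_box_tds[OF n] by (rule order_trans)
qed

end
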